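(* Let $f:\mathbb{B}\to\mathbb{H}$ be a function such that $P_f(\zeta_1,\zeta_2,\zeta_3)$ is positive semidefinite for all $\zeta_1,\zeta_2,\zeta_3\in\mathbb{D}=\mathbb{B}\cap\mathbb{C}$. Write $f(\zeta)=g(\zeta)+h(\zeta)\mathbf{j}$ with $g(\zeta),h(\zeta)\in\mathbb{C}$ for $\zeta\in\mathbb{D}$. Then for all $\zeta_1,\zeta_2,\zeta_3\in\mathbb{D}$ the complex matrix $\Big[\frac{1-g(\zeta_i)\overline{g(\zeta_j)}-h(\zeta_i)\overline{h(\zeta_j)}}{1-\zeta_i\bar\zeta_j}\Big]_{i,j=1}^3$ is positive semidefinite, and consequently $g$ and $h$ are analytic functions from $\mathbb{D}$ into the closed unit disk.
   Context: $\mathbb{H}$ denotes the real quaternions with imaginary units $\mathbf{i},\mathbf{j},\mathbf{k}$; every quaternion has a unique representation $a+b\mathbf{j}$ with $a,b\in\mathbb{C}=\mathbb{R}+\mathbf{i}\mathbb{R}$. $\mathbb{B}$ is the open unit ball of $\mathbb{H}$ and $\mathbb{D}$ the open complex unit disk. For $z_1,\dots,z_n\in\mathbb{B}$ the Pick matrix is $P_f(z_1,\dots,z_n)=\Big[\sum_{k=0}^\infty z_i^k(1-f(z_i)\overline{f(z_j)})\bar z_j^{\,k}\Big]_{i,j=1}^n$. A quaternionic matrix $A$ is positive semidefinite if $A=A^*$ and $x^*Ax\ge0$ for all quaternionic vectors $x$. *)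

theory Defs
  imports "HOL-Analysis.Analysis"
begin

text \<open>Real quaternions, represented via the unique decomposition q = a + b j with
  a, b complex (complex numbers being R + i R).
  Addition/subtraction are componentwise (library instance on pairs), the topology
  is that of complex x complex (= R^4).\<close>

type_synonym quat = "complex \<times> complex"

definition qof_complex :: "complex \<Rightarrow> quat" where
  "qof_complex z = (z, 0)"

definition qone :: quat where "qone = (1, 0)"

text \<open>(a + b j)(c + d j) = (a c - b conj d) + (a d + b conj c) j, using j c = conj c j.\<close>
definition qmult :: "quat \<Rightarrow> quat \<Rightarrow> quat" where
  "qmult p q = (fst p * fst q - snd p * cnj (snd q), fst p * snd q + snd p * cnj (fst q))"

definition qcnj :: "quat \<Rightarrow> quat" where
  "qcnj q = (cnj (fst q), - snd q)"

primrec qpow :: "quat \<Rightarrow> nat \<Rightarrow> quat" where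
  "qpow q 0 = qone"
| "qpow q (Suc n) = qmult (qpow q n) q"

definition qnonneg :: "quat \<Rightarrow> bool" where
  "qnonneg q \<longleftrightarrow> snd q = 0 \<and> Im (fst q) = 0 \<and> Re (fst q) \<ge> 0"

text \<open>Quaternionic n x n matrices as functions on indices {0..<n}.\<close>
definition qpsd :: "nat \<Rightarrow> (nat \<Rightarrow> nat \<Rightarrow> quat) \<Rightarrow> bool" where
  "qpsd n A \<longleftrightarrow>
     (\<forall>i<n. \<forall>j<n. A i j = qcnj (A j i)) \<and>
     (\<forall>x :: nat \<Rightarrow> quat. qnonneg (\<Sum>i<n. \<Sum>j<n. qmult (qmult (qcnj (x i)) (A i j)) (x j)))"

definition pick_matrix :: "(quat \<Rightarrow> quat) \<Rightarrow> (nat \<Rightarrow> quat) \<Rightarrow> nat \<Rightarrow> nat \<Rightarrow> quat" where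
  "pick_matrix f z i j =
     (\<Sum>k. qmult (qmult (qpow (z i) k) (qone - qmult (f (z i)) (qcnj (f (z j)))))
                 (qpow (qcnj (z j)) k))"

definition cpsd :: "nat \<Rightarrow> (nat \<Rightarrow> nat \<Rightarrow> complex) \<Rightarrow> bool" where
  "cpsd n A \<longleftrightarrow>
     (\<forall>i<n. \<forall>j<n. A i j = cnj (A j i)) \<and>
     (\<forall>x :: nat \<Rightarrow> complex. Im (\<Sum>i<n. \<Sum>j<n. cnj (x i) * A i j * x j) = 0 \<and>
                              Re (\<Sum>i<n. \<Sum>j<n. cnj (x i) * A i j * x j) \<ge> 0)"

end

theory Submission
  imports Defs
begin

(* Restricting the quaternionic Pick matrix of f to complex points and complex test vectors,
   its complex part is the matrix [(1 - g(z_i) conj g(z_j) - h(z_i) conj h(z_j)) / (1 - z_i conj z_j)];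
   this gives the first claim.  Adding the Szego kernel matrix
   [conj h(z_i) h(z_j) / (1 - z_i conj z_j)], which is positive semidefinite, shows that g (and
   symmetrically h) has the complex three-point Pick property.  The rest is one-variable
   function theory for a function phi with that property (locale three_point_pick):
   - 1x1 minors give |phi| <= 1, and a 2x2 minor shows that phi is constant as soon as
     |phi(a)| = 1 at some point a;
   - otherwise the Schur complement of the 3x3 Pick matrix at a is, up to a diagonal scaling,
     the 2x2 Pick matrix of the Schur quotient
        psi(z) = (phi z - phi a)(1 - conj a z) / ((1 - conj (phi a) phi z)(z - a));
   - a two-point Pick matrix yields a Lipschitz bound, so psi extends continuously to a, and
     the difference quotient of phi at a, a continuous expression in psi, converges. *)

lemma norm_mult_less_one:
  fixes p q :: complex
  assumes "cmod p < 1" "cmod q \<le> 1"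
  shows "cmod (p * q) < 1"
proof -
  have "cmod p * cmod q \<le> cmod p" using assms by (simp add: mult_left_le)
  then show ?thesis using assms(1) by (simp add: norm_mult)
qed

lemma one_minus_mult_nonzero:
  fixes p q :: complex
  assumes "cmod p < 1" "cmod q \<le> 1"
  shows "1 - p * q \<noteq> 0"
  using norm_mult_less_one[OF assms] by auto

lemma norm_one_minus_mult_cnj:
  fixes u v :: complex
  shows "(cmod (1 - u * cnj v))^2 - (1 - (cmod u)^2) * (1 - (cmod v)^2) = (cmod (u - v))^2"
  unfolding cmod_power2 by (simp add: algebra_simps power2_eq_square)

lemma psd2_determinant:
  fixes p q r :: complex
  assumes H: "\<And>e1 e2. 0 \<le> Re (cnj e1 * p * e1 + cnj e1 * q * e2 + cnj e2 * cnj q * e1 + cnj e2 * r * e2)"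
    and "Im p = 0" "Im r = 0"
  shows "0 \<le> Re p" "0 \<le> Re r" "(cmod q)^2 \<le> Re p * Re r"
proof -
  \<comment> \<open>the quadratic form at the test vector \<open>(s, - q\<^sup>*)\<close>\<close>
  have form: "0 \<le> s^2 * Re p - 2 * s * (cmod q)^2 + (cmod q)^2 * Re r" for s :: real
  proof -
    obtain qa qb where qd: "q = Complex qa qb" by (cases q)
    have "Re (cnj (of_real s) * p * of_real s + cnj (of_real s) * q * (- cnj q) + cnj (- cnj q) * cnj q * of_real s
        + cnj (- cnj q) * r * (- cnj q)) = s^2 * Re p - 2 * s * (cmod q)^2 + (cmod q)^2 * Re r"
      using assms(2,3) unfolding qd cmod_power2 by (simp add: power2_eq_square algebra_simps)
    then show ?thesis using H[of "of_real s" "- cnj q"] by simp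
  qed
  show p0: "0 \<le> Re p" using H[of 1 0] by simp
  show r0: "0 \<le> Re r" using H[of 0 1] by simp
  show "(cmod q)^2 \<le> Re p * Re r"
  proof (cases "Re p = 0")
    case True
    have "0 \<le> - 2 * (Re r + 1) * (cmod q)^2 + (cmod q)^2 * Re r"
      using form[of "Re r + 1"] True by (simp add: algebra_simps)
    then have "(cmod q)^2 * (Re r + 2) \<le> 0" by (simp add: algebra_simps)
    then have "(cmod q)^2 \<le> 0" using r0 by (simp add: mult_le_0_iff)
    then show ?thesis using True by simp
  next
    case False
    then have P: "Re p > 0" using p0 by simp
    have "0 \<le> ((cmod q)^2 / Re p)^2 * Re p - 2 * ((cmod q)^2 / Re p) * (cmod q)^2 + (cmod q)^2 * Re r"
      by (rule form)
    also have "\<dots> = (cmod q)^2 * (Re p * Re r - (cmod q)^2) / Re p"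
      using P by (simp add: field_simps power2_eq_square)
    finally have "0 \<le> (cmod q)^2 * (Re p * Re r - (cmod q)^2)"
      using P by (simp add: zero_le_divide_iff)
    then show ?thesis
      by (cases "q = 0") (use P r0 in \<open>simp_all add: zero_le_mult_iff\<close>)
  qed
qed

text \<open>The determinant inequality of a two-point Pick matrix with values \<open>u, v\<close> at the points
  \<open>x, y\<close>, written without denominators, yields a Lipschitz bound for \<open>u - v\<close>.\<close>
lemma pick_determinant_lipschitz:
  fixes u v x y :: complex
  assumes x: "cmod x < 1" and y: "cmod y < 1" and u: "cmod u \<le> 1" and v: "cmod v \<le> 1"
    and det: "(cmod (1 - u * cnj v))^2 * ((1 - (cmod x)^2) * (1 - (cmod y)^2))
             \<le> ((1 - (cmod u)^2) * (1 - (cmod v)^2)) * (cmod (1 - x * cnj y))^2"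
  shows "cmod (u - v) \<le> 2 * cmod (x - y) / (1 - cmod x * cmod y)"
proof -
  define A where "A = (cmod (1 - u * cnj v))^2"
  define B where "B = (cmod (1 - x * cnj y))^2"
  define U where "U = (1 - (cmod u)^2) * (1 - (cmod v)^2)"
  define X where "X = (1 - (cmod x)^2) * (1 - (cmod y)^2)"
  have xy: "cmod x * cmod y < 1" using norm_mult_less_one[OF x less_imp_le[OF y]] by (simp add: norm_mult)
  have "1 - cmod x * cmod y \<le> cmod (1 - x * cnj y)"
    using norm_triangle_ineq2[of 1 "x * cnj y"] by (simp add: norm_mult)
  then have B_lower: "(1 - cmod x * cmod y)^2 \<le> B" unfolding B_def using xy by (simp add: power_mono)
  have A4: "A \<le> 4"
  proof -
    have "cmod (1 - u * cnj v) \<le> 1 + cmod u * cmod v"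
      using norm_triangle_ineq4[of 1 "u * cnj v"] by (simp add: norm_mult)
    also have "\<dots> \<le> 2" using mult_le_one[OF u norm_ge_zero v] by simp
    finally have "(cmod (1 - u * cnj v))^2 \<le> 2^2" by (rule power_mono) simp
    then show ?thesis unfolding A_def by simp
  qed
  have uv: "(cmod (u - v))^2 = A - U" unfolding A_def U_def using norm_one_minus_mult_cnj[of u v] by simp
  have xy': "(cmod (x - y))^2 = B - X" unfolding B_def X_def using norm_one_minus_mult_cnj[of x y] by simp
  have "(cmod (u - v))^2 * B \<le> A * (cmod (x - y))^2"
    using det unfolding uv xy' A_def B_def U_def X_def by (simp add: algebra_simps)
  also have "\<dots> \<le> 4 * (cmod (x - y))^2" using A4 by (simp add: mult_right_mono)
  finally have "(cmod (u - v))^2 * B \<le> 4 * (cmod (x - y))^2" .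
  moreover have "(cmod (u - v))^2 * (1 - cmod x * cmod y)^2 \<le> (cmod (u - v))^2 * B"
    using B_lower by (simp add: mult_left_mono)
  ultimately have "(cmod (u - v) * (1 - cmod x * cmod y))^2 \<le> (2 * cmod (x - y))^2"
    by (simp add: power_mult_distrib)
  then have "cmod (u - v) * (1 - cmod x * cmod y) \<le> 2 * cmod (x - y)"
    by (rule power2_le_imp_le) simp
  then show ?thesis using xy by (simp add: pos_le_divide_eq)
qed

section \<open>Complex Pick kernels and their quadratic forms\<close>

lemma mult_cnj_real: "u * cnj u = complex_of_real ((cmod u)^2)"
  by (rule complex_norm_square[symmetric])

definition pick_kernel :: "(complex \<Rightarrow> complex) \<Rightarrow> complex \<Rightarrow> complex \<Rightarrow> complex" where
  "pick_kernel \<phi> p q = (1 - \<phi> p * cnj (\<phi> q)) / (1 - p * cnj q)"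

definition pick_form2 :: "(complex \<Rightarrow> complex) \<Rightarrow> complex \<Rightarrow> complex \<Rightarrow> complex \<Rightarrow> complex \<Rightarrow> complex" where
  "pick_form2 \<phi> p q e1 e2 =
     cnj e1 * pick_kernel \<phi> p p * e1 + cnj e1 * pick_kernel \<phi> p q * e2
   + cnj e2 * pick_kernel \<phi> q p * e1 + cnj e2 * pick_kernel \<phi> q q * e2"

definition pick_form3 ::
    "(complex \<Rightarrow> complex) \<Rightarrow> complex \<Rightarrow> complex \<Rightarrow> complex \<Rightarrow> complex \<Rightarrow> complex \<Rightarrow> complex \<Rightarrow> complex" where
  "pick_form3 \<phi> p0 p1 p2 c0 c1 c2 =
     cnj c0 * pick_kernel \<phi> p0 p0 * c0 + cnj c0 * pick_kernel \<phi> p0 p1 * c1 + cnj c0 * pick_kernel \<phi> p0 p2 * c2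
   + cnj c1 * pick_kernel \<phi> p1 p0 * c0 + cnj c1 * pick_kernel \<phi> p1 p1 * c1 + cnj c1 * pick_kernel \<phi> p1 p2 * c2
   + cnj c2 * pick_kernel \<phi> p2 p0 * c0 + cnj c2 * pick_kernel \<phi> p2 p1 * c1 + cnj c2 * pick_kernel \<phi> p2 p2 * c2"

lemma pick_kernel_diag: "pick_kernel \<phi> z z = of_real ((1 - (cmod (\<phi> z))^2) / (1 - (cmod z)^2))"
  by (simp add: pick_kernel_def mult_cnj_real)

lemma pick_kernel_cnj: "pick_kernel \<phi> q p = cnj (pick_kernel \<phi> p q)"
  by (simp add: pick_kernel_def mult.commute)

lemma pick_form2_determinant:
  assumes "\<And>e1 e2. 0 \<le> Re (pick_form2 \<phi> p q e1 e2)"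
  shows "0 \<le> Re (pick_kernel \<phi> p p)" "0 \<le> Re (pick_kernel \<phi> q q)"
    "(cmod (pick_kernel \<phi> p q))^2 \<le> Re (pick_kernel \<phi> p p) * Re (pick_kernel \<phi> q q)"
  using psd2_determinant[of "pick_kernel \<phi> p p" "pick_kernel \<phi> p q" "pick_kernel \<phi> q q"] assms
  by (simp_all add: pick_form2_def pick_kernel_cnj[of \<phi> q p] pick_kernel_diag)

lemma two_point_pick_lipschitz:
  fixes \<psi> :: "complex \<Rightarrow> complex"
  assumes x: "cmod x < 1" and y: "cmod y < 1"
    and H: "\<And>e1 e2. 0 \<le> Re (pick_form2 \<psi> x y e1 e2)"
  shows "cmod (\<psi> x - \<psi> y) \<le> 2 * cmod (x - y) / (1 - cmod x * cmod y)"
proof -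
  define X1 where "X1 = 1 - (cmod x)^2"
  define Y1 where "Y1 = 1 - (cmod y)^2"
  define U1 where "U1 = 1 - (cmod (\<psi> x))^2"
  define V1 where "V1 = 1 - (cmod (\<psi> y))^2"
  note D = pick_form2_determinant[OF H, unfolded pick_kernel_diag Re_complex_of_real]
  have X1: "X1 > 0" and Y1: "Y1 > 0"
    using x y unfolding X1_def Y1_def by (simp_all add: abs_square_less_1)
  have "0 \<le> U1" "0 \<le> V1"
    using D(1,2) X1 Y1 unfolding X1_def Y1_def U1_def V1_def by (simp_all add: zero_le_divide_iff)
  then have u: "cmod (\<psi> x) \<le> 1" and v: "cmod (\<psi> y) \<le> 1"
    unfolding U1_def V1_def by (simp_all add: abs_square_le_1)
  have "1 - x * cnj y \<noteq> 0" using one_minus_mult_nonzero[of x "cnj y"] x y by simp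
  then have B: "(cmod (1 - x * cnj y))^2 > 0" by simp
  have "(cmod (1 - \<psi> x * cnj (\<psi> y)))^2 / (cmod (1 - x * cnj y))^2 \<le> (U1 / X1) * (V1 / Y1)"
    using D(3) unfolding pick_kernel_def X1_def Y1_def U1_def V1_def by (simp add: norm_divide power_divide)
  then have "(cmod (1 - \<psi> x * cnj (\<psi> y)))^2 * (X1 * Y1) \<le> (U1 * V1) * (cmod (1 - x * cnj y))^2"
    using B X1 Y1 by (simp add: field_simps)
  then show ?thesis
    by (intro pick_determinant_lipschitz[OF x y u v]) (simp add: X1_def Y1_def U1_def V1_def)
qed

section \<open>Schur complements\<close>

text \<open>Eliminating \<open>c0\<close> from a \<open>3 \<times> 3\<close> quadratic form: at the minimizing \<open>c0\<close> the form equals the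
  quadratic form of the Schur complement of the \<open>(0,0)\<close> entry.\<close>
lemma schur_complement_form3:
  fixes m00 :: "'a::field"
  assumes "m00 \<noteq> 0" "c0 = -(m01*c1 + m02*c2)/m00"
  shows "d0*m00*c0 + d0*m01*c1 + d0*m02*c2 + d1*m10*c0 + d1*m11*c1 + d1*m12*c2 + d2*m20*c0 + d2*m21*c1 + d2*m22*c2
    = d1*(m11 - m10*m01/m00)*c1 + d1*(m12 - m10*m02/m00)*c2 + d2*(m21-m20*m01/m00)*c1 + d2*(m22 - m20*m02/m00)*c2"
proof -
  have "m00*c0 + m01*c1 + m02*c2 = 0" using assms by simp
  moreover have "d0*m00*c0 + d0*m01*c1 + d0*m02*c2 = d0*(m00*c0 + m01*c1 + m02*c2)"
    by (simp add: algebra_simps)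
  ultimately have r0: "d0*m00*c0 + d0*m01*c1 + d0*m02*c2 = 0" by simp
  have r1: "d1*m10*c0 + d1*m11*c1 + d1*m12*c2 = d1*(m11 - m10*m01/m00)*c1 + d1*(m12 - m10*m02/m00)*c2"
    using assms(1) unfolding assms(2) by (simp add: field_simps)
  have r2: "d2*m20*c0 + d2*m21*c1 + d2*m22*c2 = d2*(m21-m20*m01/m00)*c1 + d2*(m22 - m20*m02/m00)*c2"
    using assms(1) unfolding assms(2) by (simp add: field_simps)
  show ?thesis using r0 r1 r2 by (simp only: add.assoc [symmetric]) (simp add: add.assoc)
qed

text \<open>The field identity behind the Schur complement of a Pick matrix: for \<open>A = \<phi>(a)\<close> the
  Schur complement entry at \<open>(x, y)\<close>, scaled by \<open>1 - |A|\<^sup>2\<close>, is a Pick-type expression built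
  from the Moebius factors \<open>(x - a)/(1 - x a\<^sup>*)\<close> and \<open>(u - A)\<close>.\<close>
lemma schur_complement_field_identity:
  fixes A Ac u vc x yc a ac d1 d2 d3 d4 d5 :: "'a::field"
  assumes "d1 \<noteq> 0" "d2 \<noteq> 0" "d3 \<noteq> 0" "d4 \<noteq> 0" "d5 \<noteq> 0"
   and "d1 = 1 - x * yc" "d2 = 1 - x * ac" "d3 = 1 - a * yc" "d4 = 1 - a * ac" "d5 = 1 - A * Ac"
  shows "d5 * ((1 - u * vc)/d1 - ((1 - u * Ac)/d2) * ((1 - A * vc)/d3) / (d5/d4))
     = ((1-Ac * u) * ((x-a)/d2) * ((1-A * vc) * ((yc-ac)/d3)) - (u-A) * (vc-Ac))/d1"
proof -
  have "d5 * ((1 - u * vc)/d1 - ((1 - u * Ac)/d2) * ((1 - A * vc)/d3) / (d5/d4)) * (d1*d2*d3)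
     = ((1-Ac * u) * ((x-a)/d2) * ((1-A * vc) * ((yc-ac)/d3)) - (u-A) * (vc-Ac))/d1 * (d1*d2*d3)"
    using assms(1-5) by (simp add: field_simps) (use assms(6-10) in algebra)
  moreover have "d1*d2*d3 \<noteq> 0" using assms(1-3) by simp
  ultimately show ?thesis by (meson mult_right_cancel)
qed

lemma pick_kernel_schur_complement:
  fixes \<phi> :: "complex \<Rightarrow> complex"
  assumes a: "cmod a < 1" and i: "cmod i < 1" and j: "cmod j < 1" and \<alpha>: "cmod \<alpha> < 1"
    and \<alpha>_def: "\<alpha> = \<phi> a"
    and pI: "pI = (1 - cnj \<alpha> * \<phi> i) * ((i - a)/(1 - cnj a * i))"
    and pJ: "pJ = (1 - cnj \<alpha> * \<phi> j) * ((j - a)/(1 - cnj a * j))"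
    and sI: "sI * pI = \<phi> i - \<alpha>" and sJ: "sJ * pJ = \<phi> j - \<alpha>"
  shows "(1 - \<alpha> * cnj \<alpha>) * (pick_kernel \<phi> i j - pick_kernel \<phi> i a * pick_kernel \<phi> a j / pick_kernel \<phi> a a)
       = pI * ((1 - sI * cnj sJ)/(1 - i * cnj j)) * cnj pJ"
proof -
  have ne: "1 - p * cnj q \<noteq> 0" if "cmod p < 1" "cmod q < 1" for p q
    using one_minus_mult_nonzero[of p "cnj q"] that by simp
  have "(1 - \<alpha> * cnj \<alpha>) * (pick_kernel \<phi> i j - pick_kernel \<phi> i a * pick_kernel \<phi> a j / pick_kernel \<phi> a a)
     = ((1 - cnj \<alpha> * \<phi> i) * ((i - a)/(1 - i * cnj a)) * ((1 - \<alpha> * cnj (\<phi> j)) * ((cnj j - cnj a)/(1 - a * cnj j)))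
        - (\<phi> i - \<alpha>) * (cnj (\<phi> j) - cnj \<alpha>))/(1 - i * cnj j)"
    unfolding pick_kernel_def \<alpha>_def[symmetric]
    by (rule schur_complement_field_identity) (use ne a i j \<alpha> in auto)
  also have "\<dots> = (pI * cnj pJ - (sI * pI) * (cnj sJ * cnj pJ))/(1 - i * cnj j)"
  proof -
    have "cnj sJ * cnj pJ = cnj (\<phi> j) - cnj \<alpha>" using sJ by (metis complex_cnj_diff complex_cnj_mult)
    moreover have "cnj pJ = (1 - \<alpha> * cnj (\<phi> j)) * ((cnj j - cnj a)/(1 - a * cnj j))"
      unfolding pJ by (simp add: mult.commute)
    moreover have "pI = (1 - cnj \<alpha> * \<phi> i) * ((i - a)/(1 - i * cnj a))"
      unfolding pI by (simp add: mult.commute)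
    ultimately show ?thesis unfolding sI by simp
  qed
  also have "\<dots> = pI * ((1 - sI * cnj sJ)/(1 - i * cnj j)) * cnj pJ"
    by (simp add: algebra_simps)
  finally show ?thesis .
qed

lemma difference_quotient_identity:
  fixes u A a x :: complex
  assumes "1 - cnj A * u \<noteq> 0" "x \<noteq> a" "1 - cnj a * x \<noteq> 0" "1 - A * cnj A \<noteq> 0"
  defines "s \<equiv> (u - A) * (1 - cnj a * x) / ((1 - cnj A * u) * (x - a))"
  shows "(u - A)/(x - a) = s * (1 - A * cnj A) / ((1 - cnj a * x) + cnj A * s * (x - a))"
proof -
  define D where "D = 1 - cnj A * u"
  define E where "E = 1 - cnj a * x"
  define F where "F = 1 - A * cnj A"
  have nz: "D \<noteq> 0" "E \<noteq> 0" "F \<noteq> 0" "x - a \<noteq> 0" using assms unfolding D_def E_def F_def by auto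
  have s: "s = (u - A) * E / (D * (x - a))" unfolding s_def D_def E_def ..
  have "E + cnj A * s * (x - a) = E * (D + cnj A * (u - A)) / D"
    using nz unfolding s by (simp add: field_simps)
  also have "D + cnj A * (u - A) = F"
    unfolding D_def F_def by (simp add: algebra_simps)
  finally have den: "E + cnj A * s * (x - a) = E * F / D" .
  have "s * F / (E * F / D) = (u - A) / (x - a)"
    using nz unfolding s by (simp add: field_simps)
  then have "(u - A) / (x - a) = s * F / (E + cnj A * s * (x - a))" unfolding den by simp
  then show ?thesis unfolding E_def F_def .
qed

section \<open>Functions with the three-point Pick property\<close>

locale three_point_pick =
  fixes \<phi> :: "complex \<Rightarrow> complex"
  assumes pick_form3_nonneg: "\<And>p0 p1 p2 c0 c1 c2. cmod p0 < 1 \<Longrightarrow> cmod p1 < 1 \<Longrightarrow> cmod p2 < 1 \<Longrightarrow>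
                 0 \<le> Re (pick_form3 \<phi> p0 p1 p2 c0 c1 c2)"
begin

text \<open>\<open>1 \<times> 1\<close> minors: \<open>\<phi>\<close> maps the open disk into the closed disk.\<close>
lemma bounded_by_one:
  assumes "cmod z < 1"
  shows "cmod (\<phi> z) \<le> 1"
proof -
  have "0 \<le> Re (pick_form3 \<phi> z z z 1 0 0)" using pick_form3_nonneg assms by blast
  then have "0 \<le> (1 - (cmod (\<phi> z))^2) / (1 - (cmod z)^2)" by (simp add: pick_form3_def pick_kernel_diag)
  moreover have "(cmod z)^2 < 1" using assms by (simp add: abs_square_less_1)
  ultimately have "(cmod (\<phi> z))^2 \<le> 1" by (simp add: zero_le_divide_iff)
  then show ?thesis by (simp add: abs_square_le_1)
qed

lemma maps_into_closed_disk: "\<phi> ` ball 0 1 \<subseteq> cball 0 1"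
  using bounded_by_one by auto

text \<open>Repeating a point, the three-point property contains the two-point property.\<close>
lemma two_point_pick:
  assumes "cmod p < 1" "cmod q < 1"
  shows "0 \<le> Re (pick_form2 \<phi> p q e1 e2)"
proof -
  have "0 \<le> Re (pick_form3 \<phi> p q q e1 e2 0)" using pick_form3_nonneg assms by blast
  then show ?thesis by (simp add: pick_form3_def pick_form2_def)
qed

lemma constant_if_unimodular:
  assumes a: "cmod a < 1" and a1: "cmod (\<phi> a) = 1" and z: "cmod z < 1"
  shows "\<phi> z = \<phi> a"
proof -
  note D = pick_form2_determinant[OF two_point_pick[OF a z]]
  have "Re (pick_kernel \<phi> a a) = 0" using a1 by (simp add: pick_kernel_diag)
  with D(3) have "pick_kernel \<phi> a z = 0" by simp
  moreover have "1 - a * cnj z \<noteq> 0" using one_minus_mult_nonzero[of a "cnj z"] a z by simp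
  ultimately have e: "\<phi> a * cnj (\<phi> z) = 1" by (simp add: pick_kernel_def)
  have aa: "\<phi> a * cnj (\<phi> a) = 1" using a1 by (simp add: mult_cnj_real)
  have "cnj (\<phi> a) = cnj (\<phi> a) * (\<phi> a * cnj (\<phi> z))" using e by simp
  also have "\<dots> = (\<phi> a * cnj (\<phi> a)) * cnj (\<phi> z)" by (simp add: algebra_simps)
  also have "\<dots> = cnj (\<phi> z)" using aa by simp
  finally show ?thesis by (metis complex_cnj_cnj)
qed

text \<open>The Schur quotient of \<open>\<phi>\<close> at \<open>a\<close>: the Moebius-normalised difference quotient of \<open>\<phi>\<close>,
  the first step of the Schur algorithm.\<close>
definition schur_quotient :: "complex \<Rightarrow> complex \<Rightarrow> complex" where
  "schur_quotient a z = (\<phi> z - \<phi> a) * (1 - cnj a * z) / ((1 - cnj (\<phi> a) * \<phi> z) * (z - a))"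

lemma schur_quotient_factor:
  assumes a: "cmod a < 1" and \<alpha>: "cmod (\<phi> a) < 1" and z: "cmod z < 1" "z \<noteq> a"
  defines "p \<equiv> (1 - cnj (\<phi> a) * \<phi> z) * ((z - a)/(1 - cnj a * z))"
  shows "p \<noteq> 0" "schur_quotient a z * p = \<phi> z - \<phi> a"
proof -
  have "1 - cnj (\<phi> a) * \<phi> z \<noteq> 0"
    using one_minus_mult_nonzero[of "cnj (\<phi> a)" "\<phi> z"] \<alpha> bounded_by_one[OF z(1)] by simp
  moreover have "1 - cnj a * z \<noteq> 0" using one_minus_mult_nonzero[of "cnj a" z] a z by simp
  moreover have "m \<noteq> 0 \<Longrightarrow> t \<noteq> 0 \<Longrightarrow> w \<noteq> 0 \<Longrightarrow> (N * w / (m * t)) * (m * (t / w)) = N"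
    for N w m t :: complex
    by (simp add: field_simps)
  ultimately show "p \<noteq> 0" "schur_quotient a z * p = \<phi> z - \<phi> a"
    using z(2) unfolding p_def schur_quotient_def by simp_all
qed

lemma schur_quotient_two_point_pick:
  assumes a: "cmod a < 1" and \<alpha>: "cmod (\<phi> a) < 1"
    and x: "cmod x < 1" "x \<noteq> a" and y: "cmod y < 1" "y \<noteq> a"
  shows "0 \<le> Re (pick_form2 (schur_quotient a) x y e1 e2)"
proof -
  define p where "p z = (1 - cnj (\<phi> a) * \<phi> z) * ((z - a)/(1 - cnj a * z))" for z
  define K where "K = pick_kernel (schur_quotient a)"
  define M where "M i j = pick_kernel \<phi> i j - pick_kernel \<phi> i a * pick_kernel \<phi> a j / pick_kernel \<phi> a a" for i j
  define d where "d = 1 - \<phi> a * cnj (\<phi> a)"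
  have p: "p z \<noteq> 0" "schur_quotient a z * p z = \<phi> z - \<phi> a" if "cmod z < 1" "z \<noteq> a" for z
    using schur_quotient_factor[OF a \<alpha> that] unfolding p_def by auto
  have complement: "d * M i j = p i * K i j * cnj (p j)" if "cmod i < 1" "cmod j < 1" "i \<noteq> a" "j \<noteq> a" for i j
    unfolding d_def M_def K_def pick_kernel_def[of "schur_quotient a" i j]
    by (rule pick_kernel_schur_complement[OF a that(1,2) \<alpha> refl p_def p_def]) (use p that in auto)
  have Maa: "pick_kernel \<phi> a a \<noteq> 0"
  proof -
    have "(cmod (\<phi> a))^2 < 1" "(cmod a)^2 < 1" using \<alpha> a by (simp_all add: abs_square_less_1)
    then show ?thesis unfolding pick_kernel_diag of_real_eq_0_iff by simp
  qed
  \<comment> \<open>test vector: \<open>c0\<close> eliminates the row of \<open>a\<close>, \<open>c1, c2\<close> undo the diagonal scaling by \<open>p\<close>\<close>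
  define c1 where "c1 = e1 / cnj (p x)"
  define c2 where "c2 = e2 / cnj (p y)"
  define c0 where "c0 = - (pick_kernel \<phi> a x * c1 + pick_kernel \<phi> a y * c2) / pick_kernel \<phi> a a"
  have unscale: "cnj (e / cnj P) * (P * k * cnj R) * (f / cnj R) = cnj e * k * f" if "P \<noteq> 0" "R \<noteq> 0"
    for e f k P R :: complex
    using that by (simp add: field_simps)
  have "d * pick_form3 \<phi> a x y c0 c1 c2 =
      cnj c1 * (d * M x x) * c1 + cnj c1 * (d * M x y) * c2 + cnj c2 * (d * M y x) * c1 + cnj c2 * (d * M y y) * c2"
    unfolding pick_form3_def schur_complement_form3[OF Maa c0_def] M_def by (simp add: algebra_simps)
  also have "\<dots> = pick_form2 (schur_quotient a) x y e1 e2"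
    unfolding complement[OF x(1) x(1) x(2) x(2)] complement[OF x(1) y(1) x(2) y(2)]
      complement[OF y(1) x(1) y(2) x(2)] complement[OF y(1) y(1) y(2) y(2)]
      c1_def c2_def unscale[OF p(1)[OF x] p(1)[OF y]] unscale[OF p(1)[OF x] p(1)[OF x]]
      unscale[OF p(1)[OF y] p(1)[OF x]] unscale[OF p(1)[OF y] p(1)[OF y]]
    by (simp add: pick_form2_def K_def)
  finally have eq: "d * pick_form3 \<phi> a x y c0 c1 c2 = pick_form2 (schur_quotient a) x y e1 e2" .
  have "d = of_real (1 - (cmod (\<phi> a))^2)" unfolding d_def by (simp add: mult_cnj_real)
  moreover have "(cmod (\<phi> a))^2 < 1" using \<alpha> by (simp add: abs_square_less_1)
  moreover have "0 \<le> Re (pick_form3 \<phi> a x y c0 c1 c2)" using pick_form3_nonneg a x y by blast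
  ultimately show ?thesis unfolding eq[symmetric] by simp
qed

lemma schur_quotient_lipschitz:
  assumes a: "cmod a < 1" and \<alpha>: "cmod (\<phi> a) < 1" and \<rho>: "\<rho> < 1"
    and z: "cmod z \<le> \<rho>" "z \<noteq> a" and w: "cmod w \<le> \<rho>" "w \<noteq> a"
  shows "cmod (schur_quotient a z - schur_quotient a w) \<le> 2 / (1 - \<rho>^2) * cmod (z - w)"
proof -
  have z1: "cmod z < 1" and w1: "cmod w < 1" using z w \<rho> by auto
  have \<rho>0: "0 \<le> \<rho>" using z(1) norm_ge_zero order_trans by blast
  have "cmod z * cmod w \<le> \<rho> * \<rho>" using z w \<rho>0 by (intro mult_mono) auto
  then have "1 - \<rho>^2 \<le> 1 - cmod z * cmod w" by (simp add: power2_eq_square)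
  moreover have "0 < 1 - \<rho>^2" using \<rho> \<rho>0 by (simp add: abs_square_less_1)
  ultimately have "2 * cmod (z - w) / (1 - cmod z * cmod w) \<le> 2 * cmod (z - w) / (1 - \<rho>^2)"
    by (intro divide_left_mono) auto
  then show ?thesis
    using two_point_pick_lipschitz[OF z1 w1 schur_quotient_two_point_pick[OF a \<alpha> z1 z(2) w1 w(2)]]
    by simp
qed

lemma difference_quotient_schur:
  assumes a: "cmod a < 1" and \<alpha>: "cmod (\<phi> a) < 1" and z: "cmod z < 1" "z \<noteq> a"
  shows "(\<phi> z - \<phi> a) / (z - a) = schur_quotient a z * (1 - \<phi> a * cnj (\<phi> a))
           / ((1 - cnj a * z) + cnj (\<phi> a) * schur_quotient a z * (z - a))"
  unfolding schur_quotient_def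
proof (rule difference_quotient_identity)
  show "1 - cnj (\<phi> a) * \<phi> z \<noteq> 0"
    using one_minus_mult_nonzero[of "cnj (\<phi> a)" "\<phi> z"] \<alpha> bounded_by_one[OF z(1)] by simp
  show "1 - cnj a * z \<noteq> 0" using one_minus_mult_nonzero[of "cnj a" z] a z by simp
  show "1 - \<phi> a * cnj (\<phi> a) \<noteq> 0" using one_minus_mult_nonzero[of "\<phi> a" "cnj (\<phi> a)"] \<alpha> by simp
qed (use z in simp)

text \<open>Being Lipschitz on a punctured neighbourhood of \<open>a\<close>, the Schur quotient at \<open>a\<close> has a
  limit at \<open>a\<close>.\<close>
lemma schur_quotient_limit:
  assumes a: "cmod a < 1" and \<alpha>: "cmod (\<phi> a) < 1"
  obtains L where "(schur_quotient a \<longlongrightarrow> L) (at a)"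
proof -
  define r where "r = (1 - cmod a) / 2"
  define \<rho> where "\<rho> = (1 + cmod a) / 2"
  define S where "S = ball a r - {a}"
  have r: "r > 0" and \<rho>: "\<rho> < 1" using a unfolding r_def \<rho>_def by auto
  have inS: "cmod z \<le> \<rho> \<and> z \<noteq> a" if "z \<in> S" for z
    using that norm_triangle_ineq4[of a "a - z"] unfolding S_def r_def \<rho>_def by (auto simp: dist_norm)
  have "\<rho>^2 < 1" using \<rho> unfolding \<rho>_def by (simp add: abs_square_less_1)
  then have "(2 / (1 - \<rho>^2))-lipschitz_on S (schur_quotient a)"
    using schur_quotient_lipschitz[OF a \<alpha> \<rho>] inS by (auto simp: lipschitz_on_def dist_norm)
  then have "uniformly_continuous_on S (schur_quotient a)" by (rule lipschitz_on_uniformly_continuous)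
  moreover have "a \<in> closure S"
    unfolding S_def islimpt_in_closure[symmetric] using r by (simp add: islimpt_ball)
  ultimately obtain L where "(schur_quotient a \<longlongrightarrow> L) (at a within S)"
    using uniformly_continuous_on_extension_at_closure by blast
  moreover have "at a within S = at a"
  proof -
    have "at a within S = at a within ball a r" unfolding S_def at_within_def by simp
    also have "\<dots> = at a" using r by (intro at_within_open) auto
    finally show ?thesis .
  qed
  ultimately show ?thesis using that by simp
qed

text \<open>At a point with \<open>|\<phi>(a)| < 1\<close> the difference quotient of \<open>\<phi>\<close> is eventually a continuous
  expression in the Schur quotient, which converges; so \<open>\<phi>\<close> is differentiable at \<open>a\<close>.\<close>
lemma differentiable_at:
  assumes a: "cmod a < 1" and \<alpha>: "cmod (\<phi> a) < 1"
  shows "\<phi> field_differentiable (at a)"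
proof -
  define \<psi> where "\<psi> = schur_quotient a"
  define Q where "Q z = \<psi> z * (1 - \<phi> a * cnj (\<phi> a)) / ((1 - cnj a * z) + cnj (\<phi> a) * \<psi> z * (z - a))" for z
  obtain L where L: "(\<psi> \<longlongrightarrow> L) (at a)" using schur_quotient_limit[OF a \<alpha>] unfolding \<psi>_def .
  define D where "D = L * (1 - \<phi> a * cnj (\<phi> a)) / ((1 - cnj a * a) + cnj (\<phi> a) * L * (a - a))"
  have "1 - cnj a * a \<noteq> 0" using one_minus_mult_nonzero[of "cnj a" a] a by simp
  then have "(Q \<longlongrightarrow> D) (at a)"
    unfolding Q_def D_def by (intro tendsto_intros L) auto
  moreover have "eventually (\<lambda>z. Q z = (\<phi> z - \<phi> a) / (z - a)) (at a)"
    unfolding eventually_at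
  proof (intro exI[of _ "1 - cmod a"] conjI ballI impI allI)
    fix z assume "z \<noteq> a \<and> dist z a < 1 - cmod a"
    moreover have "cmod z \<le> cmod a + cmod (z - a)" using norm_triangle_ineq[of a "z - a"] by simp
    ultimately have "cmod z < 1" "z \<noteq> a" by (auto simp: dist_norm)
    then show "Q z = (\<phi> z - \<phi> a) / (z - a)"
      unfolding Q_def \<psi>_def by (rule difference_quotient_schur[OF a \<alpha>, symmetric])
  qed (use a in simp)
  ultimately have "((\<lambda>z. (\<phi> z - \<phi> a) / (z - a)) \<longlongrightarrow> D) (at a)"
    by (rule Lim_transform_eventually)
  then show ?thesis unfolding field_differentiable_def has_field_derivative_iff by blast
qed

text \<open>Either \<open>\<phi>\<close> is a unimodular constant or \<open>|\<phi>| < 1\<close> everywhere, and then it is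
  differentiable at every point.\<close>
lemma holomorphic_on_disk: "\<phi> holomorphic_on ball 0 1"
proof (cases "\<exists>a. cmod a < 1 \<and> cmod (\<phi> a) = 1")
  case True
  then obtain a where a: "cmod a < 1" "cmod (\<phi> a) = 1" by blast
  have "(\<lambda>z. \<phi> a) holomorphic_on ball 0 1" by (rule holomorphic_on_const)
  then show ?thesis
    by (rule holomorphic_transform) (use constant_if_unimodular[OF a] in auto)
next
  case False
  then have "\<phi> field_differentiable (at z)" if "cmod z < 1" for z
    using that bounded_by_one[OF that] by (intro differentiable_at) force+
  then show ?thesis unfolding holomorphic_on_def
    by (auto intro: field_differentiable_at_within)
qed

end

section \<open>From the quaternionic Pick matrix to the complex three-point Pick property\<close>

lemma qpow_qof_complex: "qpow (qof_complex z) k = (z^k, 0)"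
  by (induction k) (simp_all add: qof_complex_def qone_def qmult_def)

lemma sums_Pair:
  assumes "a sums A" "b sums B"
  shows "(\<lambda>k. (a k, b k)) sums (A, B)"
proof -
  have "(\<lambda>n. (\<Sum>k<n. a k, \<Sum>k<n. b k)) \<longlonglongrightarrow> (A, B)"
    using assms unfolding sums_def by (intro tendsto_Pair)
  then show ?thesis unfolding sums_def by (simp add: sum_prod)
qed

text \<open>At complex points the Pick series is a pair of geometric series.\<close>
lemma pick_matrix_complex_entry:
  fixes f :: "quat \<Rightarrow> quat" and \<zeta> :: "nat \<Rightarrow> complex"
  assumes z: "cmod (\<zeta> i) < 1" and w: "cmod (\<zeta> j) < 1"
  defines "E \<equiv> qone - qmult (f (qof_complex (\<zeta> i))) (qcnj (f (qof_complex (\<zeta> j))))"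
  shows "pick_matrix f (\<lambda>i. qof_complex (\<zeta> i)) i j =
           (fst E / (1 - \<zeta> i * cnj (\<zeta> j)), snd E / (1 - \<zeta> i * \<zeta> j))"
proof -
  have series_term: "qmult (qmult (qpow (qof_complex (\<zeta> i)) k) E) (qpow (qcnj (qof_complex (\<zeta> j))) k)
     = (fst E * (\<zeta> i * cnj (\<zeta> j))^k, snd E * (\<zeta> i * \<zeta> j)^k)" for k
  proof -
    have "qcnj (qof_complex (\<zeta> j)) = qof_complex (cnj (\<zeta> j))" by (simp add: qcnj_def qof_complex_def)
    then show ?thesis
      by (simp add: qpow_qof_complex qmult_def power_mult_distrib algebra_simps)
  qed
  have "cmod (\<zeta> i * cnj (\<zeta> j)) < 1" "cmod (\<zeta> i * \<zeta> j) < 1"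
    using norm_mult_less_one[of "\<zeta> i"] z w by auto
  then have "(\<lambda>k. (fst E * (\<zeta> i * cnj (\<zeta> j))^k, snd E * (\<zeta> i * \<zeta> j)^k)) sums
      (fst E * (1 / (1 - \<zeta> i * cnj (\<zeta> j))), snd E * (1 / (1 - \<zeta> i * \<zeta> j)))"
    by (intro sums_Pair sums_mult geometric_sums)
  then show ?thesis
    unfolding pick_matrix_def E_def[symmetric] series_term by (simp add: sums_iff)
qed

text \<open>The Szego kernel \<open>1/(1 - p\<^sub>i p\<^sub>j\<^sup>*)\<close> is positive semidefinite: it is a sum of rank-one
  matrices \<open>(p\<^sub>i p\<^sub>j\<^sup>*)\<^sup>k\<close>.\<close>
lemma szego_kernel_psd:
  assumes "finite I" "\<And>i. i \<in> I \<Longrightarrow> cmod (p i) < 1"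
  shows "0 \<le> Re (\<Sum>i\<in>I. \<Sum>j\<in>I. cnj (y i) * (1 / (1 - p i * cnj (p j))) * y j)"
proof -
  define w where "w k = (\<Sum>j\<in>I. cnj (p j)^k * y j)" for k
  have "(\<lambda>k. cnj (y i) * (p i * cnj (p j))^k * y j) sums (cnj (y i) * (1 / (1 - p i * cnj (p j))) * y j)"
    if "i \<in> I" "j \<in> I" for i j
    using norm_mult_less_one[of "p i" "cnj (p j)"] assms(2)[OF that(1)] assms(2)[OF that(2)]
    by (intro sums_mult sums_mult2 geometric_sums) simp
  then have "(\<lambda>k. \<Sum>i\<in>I. \<Sum>j\<in>I. cnj (y i) * (p i * cnj (p j))^k * y j) sums
           (\<Sum>i\<in>I. \<Sum>j\<in>I. cnj (y i) * (1 / (1 - p i * cnj (p j))) * y j)"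
    by (intro sums_sum)
  moreover have "(\<Sum>i\<in>I. \<Sum>j\<in>I. cnj (y i) * (p i * cnj (p j))^k * y j) = of_real ((cmod (w k))^2)" for k
    unfolding w_def complex_norm_square
    by (simp add: sum_distrib_left sum_distrib_right power_mult_distrib algebra_simps)
  ultimately have "(\<lambda>k. (cmod (w k))^2) sums Re (\<Sum>i\<in>I. \<Sum>j\<in>I. cnj (y i) * (1 / (1 - p i * cnj (p j))) * y j)"
    using sums_Re by fastforce
  moreover from this have "0 \<le> (\<Sum>k. (cmod (w k))^2)" by (intro suminf_nonneg sums_summable) auto
  ultimately show ?thesis by (simp add: sums_iff)
qed

text \<open>Testing the quaternionic Pick matrix with complex vectors only sees its complex part.\<close>
lemma pick_complex_part_cpsd:
  fixes f :: "quat \<Rightarrow> quat" and g h :: "complex \<Rightarrow> complex" and n :: nat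
  assumes pick: "qpsd n (pick_matrix f (\<lambda>i. qof_complex (\<zeta> i)))"
    and g: "\<And>z. g z = fst (f (qof_complex z))" and h: "\<And>z. h z = snd (f (qof_complex z))"
    and z: "\<forall>i<n. \<zeta> i \<in> ball 0 1"
  shows "cpsd n (\<lambda>i j. (1 - g (\<zeta> i) * cnj (g (\<zeta> j)) - h (\<zeta> i) * cnj (h (\<zeta> j))) / (1 - \<zeta> i * cnj (\<zeta> j)))"
proof -
  define P where "P = pick_matrix f (\<lambda>i. qof_complex (\<zeta> i))"
  define M where "M i j = (1 - g (\<zeta> i) * cnj (g (\<zeta> j)) - h (\<zeta> i) * cnj (h (\<zeta> j))) / (1 - \<zeta> i * cnj (\<zeta> j))" for i j
  have fstP: "fst (P i j) = M i j" if "i < n" "j < n" for i j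
  proof -
    have "f (qof_complex w) = (g w, h w)" for w by (simp add: g h)
    moreover have "cmod (\<zeta> i) < 1" "cmod (\<zeta> j) < 1" using z that by auto
    ultimately show ?thesis unfolding P_def M_def
      by (simp add: pick_matrix_complex_entry qone_def qmult_def qcnj_def)
  qed
  show ?thesis unfolding cpsd_def M_def[symmetric]
  proof (intro conjI allI impI)
    fix i j :: nat assume ij: "i < n" "j < n"
    have "P i j = qcnj (P j i)" using pick ij unfolding P_def qpsd_def by blast
    then have "fst (P i j) = cnj (fst (P j i))" by (simp add: qcnj_def)
    then show "M i j = cnj (M j i)" using fstP ij by simp
  next
    fix x :: "nat \<Rightarrow> complex"
    define X where "X i = (x i, 0::complex)" for i
    have "fst (\<Sum>i<n. \<Sum>j<n. qmult (qmult (qcnj (X i)) (P i j)) (X j))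
        = (\<Sum>i<n. \<Sum>j<n. cnj (x i) * M i j * x j)"
      by (simp add: fst_sum X_def qmult_def qcnj_def fstP)
    moreover have "qnonneg (\<Sum>i<n. \<Sum>j<n. qmult (qmult (qcnj (X i)) (P i j)) (X j))"
      using pick unfolding P_def qpsd_def by blast
    ultimately show "Im (\<Sum>i<n. \<Sum>j<n. cnj (x i) * M i j * x j) = 0"
      and "0 \<le> Re (\<Sum>i<n. \<Sum>j<n. cnj (x i) * M i j * x j)"
      unfolding qnonneg_def by auto
  qed
qed

text \<open>Adding the positive semidefinite Szego term for \<open>h\<close> recovers the Pick matrix of \<open>g\<close>.\<close>
lemma three_point_pick_of_cpsd:
  fixes g h :: "complex \<Rightarrow> complex"
  assumes C: "\<And>\<zeta>. (\<forall>i<3. \<zeta> i \<in> ball 0 1) \<Longrightarrow>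
     cpsd 3 (\<lambda>i j. (1 - g (\<zeta> i) * cnj (g (\<zeta> j)) - h (\<zeta> i) * cnj (h (\<zeta> j))) / (1 - \<zeta> i * cnj (\<zeta> j)))"
  shows "three_point_pick g"
proof
  fix p0 p1 p2 c0 c1 c2 :: complex
  assume n: "cmod p0 < 1" "cmod p1 < 1" "cmod p2 < 1"
  define \<zeta> where "\<zeta> i = (if i = 0 then p0 else if i = 1 then p1 else p2)" for i :: nat
  define x where "x i = (if i = 0 then c0 else if i = 1 then c1 else c2)" for i :: nat
  define y where "y i = cnj (h (\<zeta> i)) * x i" for i
  define M where "M i j = (1 - g (\<zeta> i) * cnj (g (\<zeta> j)) - h (\<zeta> i) * cnj (h (\<zeta> j))) / (1 - \<zeta> i * cnj (\<zeta> j))" for i j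
  have \<zeta>: "cmod (\<zeta> i) < 1" for i using n unfolding \<zeta>_def by auto
  have "cpsd 3 M" unfolding M_def by (rule C) (simp add: \<zeta>)
  then have M: "0 \<le> Re (\<Sum>i<3. \<Sum>j<3. cnj (x i) * M i j * x j)" unfolding cpsd_def by blast
  have S: "0 \<le> Re (\<Sum>i<3. \<Sum>j<3. cnj (y i) * (1 / (1 - \<zeta> i * cnj (\<zeta> j))) * y j)"
    by (rule szego_kernel_psd) (auto simp: \<zeta>)
  have split: "cnj (x i) * pick_kernel g (\<zeta> i) (\<zeta> j) * x j
      = cnj (x i) * M i j * x j + cnj (y i) * (1 / (1 - \<zeta> i * cnj (\<zeta> j))) * y j" for i j
    unfolding pick_kernel_def M_def y_def by (simp add: diff_divide_distrib add_divide_distrib algebra_simps)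
  have "pick_form3 g p0 p1 p2 c0 c1 c2 = (\<Sum>i<3. \<Sum>j<3. cnj (x i) * pick_kernel g (\<zeta> i) (\<zeta> j) * x j)"
    by (simp add: pick_form3_def \<zeta>_def x_def numeral_3_eq_3 numeral_2_eq_2)
  also have "\<dots> = (\<Sum>i<3. \<Sum>j<3. cnj (x i) * M i j * x j)
                 + (\<Sum>i<3. \<Sum>j<3. cnj (y i) * (1 / (1 - \<zeta> i * cnj (\<zeta> j))) * y j)"
    unfolding split by (simp add: sum.distrib)
  finally show "0 \<le> Re (pick_form3 g p0 p1 p2 c0 c1 c2)" using M S by simp
qed

theorem mainTheorem5:
  fixes f :: "quat \<Rightarrow> quat"
  assumes pick3: "\<And>\<zeta> :: nat \<Rightarrow> complex. (\<forall>i<3. \<zeta> i \<in> ball 0 1) \<Longrightarrow>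
                    qpsd 3 (pick_matrix f (\<lambda>i. qof_complex (\<zeta> i)))"
  defines "g \<equiv> (\<lambda>z. fst (f (qof_complex z)))"
      and "h \<equiv> (\<lambda>z. snd (f (qof_complex z)))"
  shows "(\<forall>\<zeta> :: nat \<Rightarrow> complex. (\<forall>i<3. \<zeta> i \<in> ball 0 1) \<longrightarrow>
            cpsd 3 (\<lambda>i j. (1 - g (\<zeta> i) * cnj (g (\<zeta> j)) - h (\<zeta> i) * cnj (h (\<zeta> j)))
                          / (1 - \<zeta> i * cnj (\<zeta> j))))
       \<and> g analytic_on ball 0 1 \<and> h analytic_on ball 0 1
       \<and> g ` ball 0 1 \<subseteq> cball 0 1 \<and> h ` ball 0 1 \<subseteq> cball 0 1"
proof -
  have cpsd_gh: "\<And>\<zeta>. (\<forall>i<3. \<zeta> i \<in> ball 0 1) \<Longrightarrow>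
     cpsd 3 (\<lambda>i j. (1 - g (\<zeta> i) * cnj (g (\<zeta> j)) - h (\<zeta> i) * cnj (h (\<zeta> j))) / (1 - \<zeta> i * cnj (\<zeta> j)))"
    by (rule pick_complex_part_cpsd[OF pick3]) (simp_all add: g_def h_def)
  then have g: "three_point_pick g" by (rule three_point_pick_of_cpsd)
  \<comment> \<open>the roles of \<open>g\<close> and \<open>h\<close> in the kernel are symmetric\<close>
  have swap: "(\<lambda>i j. (1 - h (\<zeta> i) * cnj (h (\<zeta> j)) - g (\<zeta> i) * cnj (g (\<zeta> j))) / (1 - \<zeta> i * cnj (\<zeta> j)))
      = (\<lambda>i j. (1 - g (\<zeta> i) * cnj (g (\<zeta> j)) - h (\<zeta> i) * cnj (h (\<zeta> j))) / (1 - \<zeta> i * cnj (\<zeta> j)))"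
    for \<zeta> :: "nat \<Rightarrow> complex"
    by (simp add: algebra_simps)
  have "three_point_pick h"
    by (rule three_point_pick_of_cpsd[where h = g]) (simp only: swap cpsd_gh)
  then show ?thesis
    using cpsd_gh g three_point_pick.holomorphic_on_disk three_point_pick.maps_into_closed_disk
    by (simp add: analytic_on_open)
qed

end
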